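(* Let $n\ge 0$ be an integer. Let $K$ be the complete directed graph (without self-loops) on $2n+1$ vertices, and let $R$ be any graph obtained from $K$ by deleting, for each vertex, an arbitrary set of $n$ of its incoming edges. Then at least one vertex of $R$ has at least $n$ outgoing edges in $R$. *)

theory Defs
  imports Main
begin

text \<open>Complete directed graph without self-loops on vertex set V, as a set of arcs (u,v) meaning u -> v.\<close>
definition complete_digraph :: "'a set \<Rightarrow> ('a \<times> 'a) set" where
  "complete_digraph V = {(u, v). u \<in> V \<and> v \<in> V \<and> u \<noteq> v}"

definition in_arcs :: "('a \<times> 'a) set \<Rightarrow> 'a \<Rightarrow> ('a \<times> 'a) set" where
  "in_arcs E v = {e \<in> E. snd e = v}"

definition out_arcs :: "('a \<times> 'a) set \<Rightarrow> 'a \<Rightarrow> ('a \<times> 'a) set" where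
  "out_arcs E v = {e \<in> E. fst e = v}"

end

theory Submission
  imports Defs
begin

text \<open>Every vertex of the complete digraph on \<open>2n+1\<close> vertices has in-degree \<open>2n\<close>, so after
  deleting \<open>n\<close> incoming arcs at each vertex every vertex of \<open>R\<close> has in-degree exactly \<open>n\<close>.
  Hence \<open>R\<close> has \<open>(2n+1) n\<close> arcs; counting them by their tails instead, the \<open>2n+1\<close> out-degrees
  sum to \<open>(2n+1) n\<close>, so one of them is at least the average \<open>n\<close>.\<close>

lemma card_eq_sum_card_fibres:
  assumes "finite A" "finite B" "f ` A \<subseteq> B"
  shows "card A = (\<Sum>b\<in>B. card {a \<in> A. f a = b})"
  using sum.group[OF assms, of "\<lambda>_. 1 :: nat"] by simp

lemma sum_card_in_arcs:
  assumes "finite V" "E \<subseteq> V \<times> V"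
  shows "(\<Sum>v\<in>V. card (in_arcs E v)) = card E"
proof -
  have "finite E" using assms finite_subset by blast
  with assms show ?thesis
    unfolding in_arcs_def by (subst card_eq_sum_card_fibres[of E V snd]) auto
qed

lemma sum_card_out_arcs:
  assumes "finite V" "E \<subseteq> V \<times> V"
  shows "(\<Sum>v\<in>V. card (out_arcs E v)) = card E"
proof -
  have "finite E" using assms finite_subset by blast
  with assms show ?thesis
    unfolding out_arcs_def by (subst card_eq_sum_card_fibres[of E V fst]) auto
qed

lemma complete_digraph_subset_Times: "complete_digraph V \<subseteq> V \<times> V"
  unfolding complete_digraph_def by auto

lemma card_in_arcs_complete_digraph:
  assumes "finite V" "v \<in> V"
  shows "card (in_arcs (complete_digraph V) v) = card V - 1"
proof -
  have "in_arcs (complete_digraph V) v = (\<lambda>u. (u, v)) ` (V - {v})"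
    using assms(2) unfolding in_arcs_def complete_digraph_def by auto
  then show ?thesis
    using assms by (simp add: card_image inj_on_def)
qed

lemma card_in_arcs_add_card_in_arcs_complement:
  assumes "finite V" "v \<in> V" "R \<subseteq> complete_digraph V"
  shows "card (in_arcs R v) + card (in_arcs (complete_digraph V - R) v) = card V - 1"
proof -
  let ?K = "complete_digraph V"
  have "finite ?K"
    by (rule finite_subset[OF complete_digraph_subset_Times]) (simp add: assms(1))
  then have "finite (in_arcs ?K v)"
    unfolding in_arcs_def by simp
  moreover have "in_arcs R v \<subseteq> in_arcs ?K v"
    using assms(3) unfolding in_arcs_def by auto
  moreover have "in_arcs (?K - R) v = in_arcs ?K v - in_arcs R v"
    unfolding in_arcs_def by auto
  ultimately have "card (in_arcs R v) + card (in_arcs (?K - R) v) = card (in_arcs ?K v)"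
    using card_Diff_subset[of "in_arcs R v" "in_arcs ?K v"] card_mono
    by (metis finite_subset le_add_diff_inverse)
  with card_in_arcs_complete_digraph[OF assms(1,2)] show ?thesis by simp
qed

theorem corollary1:
  fixes V :: "'a set" and R :: "('a \<times> 'a) set" and n :: nat
  assumes "finite V" and "card V = 2 * n + 1"
    and "R \<subseteq> complete_digraph V"
    and "\<forall>v\<in>V. card (in_arcs (complete_digraph V - R) v) = n"
  shows "\<exists>v\<in>V. card (out_arcs R v) \<ge> n"
proof -
  have "R \<subseteq> V \<times> V"
    using assms(3) complete_digraph_subset_Times by blast
  have "card (in_arcs R v) = n" if "v \<in> V" for v
    using card_in_arcs_add_card_in_arcs_complement[OF assms(1) that assms(3)] assms(2,4) that
    by simp
  then have "card R = card V * n"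
    using sum_card_in_arcs[OF assms(1) \<open>R \<subseteq> V \<times> V\<close>] by simp
  then have out_degree_sum: "(\<Sum>v\<in>V. card (out_arcs R v)) = card V * n"
    using sum_card_out_arcs[OF assms(1) \<open>R \<subseteq> V \<times> V\<close>] by simp
  show ?thesis
  proof (rule ccontr)
    assume "\<not> ?thesis"
    then have "(\<Sum>v\<in>V. card (out_arcs R v)) < card V * n"
      using sum_bounded_above_strict[of V "\<lambda>v. card (out_arcs R v)" n] assms(2)
      by (simp add: not_le)
    with out_degree_sum show False by simp
  qed
qed

end
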